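(* Let $G$ be a countable group, equipped with a proper left-invariant metric, acting by isometries on a metric space $X$ that has straight finite decomposition complexity. If there is a point $x_0\in X$ such that for every $R>0$ the $R$-coarse stabilizer $\{g\in G: d(g.x_0,x_0)\le R\}$ (with the metric restricted from $G$) has straight finite decomposition complexity, then $G$ has straight finite decomposition complexity.
   Context: A metric is proper if bounded sets are finite. For metric families $\mathcal X,\mathcal Y$ and $R>0$, $\mathcal X\xrightarrow{R}\mathcal Y$ means every $Z\in\mathcal X$ can be written $Z=Z^0\cup Z^1$ with each $Z^i$ a union of members of $\mathcal Y$ that are pairwise at distance $>R$. A metric space $X$ (identified with the family $\{X\}$) has straight finite decomposition complexity if for every sequence $R_1\le R_2\le\cdots$ there exist $n$ and metric families $\mathcal Y^1,\dots,\mathcal Y^n$ with $\{X\}\xrightarrow{R_1}\mathcal Y^1$, $\mathcal Y^{i-1}\xrightarrow{R_i}\mathcal Y^i$ ($2\le i\le n$), and $\mathcal Y^n$ uniformly bounded. *)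

theory Defs
  imports "HOL-Analysis.Analysis" "HOL-Algebra.Group_Action"
begin

text \<open>Distance between two subsets (infimum of pointwise distances), valued in the
extended reals so that the distance to the empty set is infinite.\<close>
definition set_dist :: "('a \<Rightarrow> 'a \<Rightarrow> real) \<Rightarrow> 'a set \<Rightarrow> 'a set \<Rightarrow> ereal" where
  "set_dist d A B = (INF a\<in>A. INF b\<in>B. ereal (d a b))"

definition R_disjoint_union_of ::
    "('a \<Rightarrow> 'a \<Rightarrow> real) \<Rightarrow> real \<Rightarrow> 'a set set \<Rightarrow> 'a set \<Rightarrow> bool" where
  "R_disjoint_union_of d R \<Y> Z \<longleftrightarrow>
     (\<exists>\<F>. \<F> \<subseteq> \<Y> \<and> Z = \<Union>\<F> \<and>
        (\<forall>A\<in>\<F>. \<forall>B\<in>\<F>. A \<noteq> B \<longrightarrow> ereal R < set_dist d A B))"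

definition decomposes ::
    "('a \<Rightarrow> 'a \<Rightarrow> real) \<Rightarrow> 'a set set \<Rightarrow> real \<Rightarrow> 'a set set \<Rightarrow> bool" where
  "decomposes d \<X> R \<Y> \<longleftrightarrow>
     (\<forall>Z\<in>\<X>. \<exists>Z0 Z1. Z = Z0 \<union> Z1 \<and>
        R_disjoint_union_of d R \<Y> Z0 \<and> R_disjoint_union_of d R \<Y> Z1)"

definition uniformly_bounded :: "('a \<Rightarrow> 'a \<Rightarrow> real) \<Rightarrow> 'a set set \<Rightarrow> bool" where
  "uniformly_bounded d \<Y> \<longleftrightarrow> (\<exists>B. \<forall>Y\<in>\<Y>. \<forall>a\<in>Y. \<forall>b\<in>Y. d a b \<le> B)"

text \<open>Straight finite decomposition complexity of the metric space (M, d).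
 Sequences are indexed from 0: R 0 \<le> R 1 \<le> ..., families Y 0, ..., Y (n-1).\<close>
definition straight_FDC :: "'a set \<Rightarrow> ('a \<Rightarrow> 'a \<Rightarrow> real) \<Rightarrow> bool" where
  "straight_FDC M d \<longleftrightarrow>
     (\<forall>R :: nat \<Rightarrow> real. (\<forall>i. 0 < R i) \<and> mono R \<longrightarrow>
        (\<exists>n \<ge> 1. \<exists>\<Y> :: nat \<Rightarrow> 'a set set.
           (\<forall>i<n. \<Y> i \<subseteq> Pow M) \<and>
           decomposes d {M} (R 0) (\<Y> 0) \<and>
           (\<forall>i. 0 < i \<and> i < n \<longrightarrow> decomposes d (\<Y> (i - 1)) (R i) (\<Y> i)) \<and>
           uniformly_bounded d (\<Y> (n - 1))))"

end

theory Submission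
  imports Defs
begin

text \<open>Since balls in G are finite, the orbit map g \<mapsto> g.x0 is coarsely Lipschitz: points at
distance at most r in G are sent to points at distance at most \<rho>(r) in X. Pulling back a
decomposition chain of X for the radii \<rho>(R i + 1) therefore decomposes G, for the radii R i, into
preimages of uniformly bounded subsets of X. If such a subset has diameter at most B, its preimage
lies in a single left translate g\<cdot>S of the coarse stabilizer S = {k. d(k.x0, x0) \<le> B}, and left
translation is an isometry of G. A decomposition chain of S for the remaining radii, moved into
each of these pieces, completes the chain for G.\<close>

lemma set_dist_less_imp_less:
  assumes "ereal c < set_dist d A B" "a \<in> A" "b \<in> B"
  shows "c < d a b"
proof -
  have "set_dist d A B \<le> ereal (d a b)"
    unfolding set_dist_def by (rule INF_lower2[OF assms(2)], rule INF_lower[OF assms(3)])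
  with assms(1) have "ereal c < ereal (d a b)" by (rule less_le_trans)
  then show ?thesis by simp
qed

lemma set_dist_greatest:
  assumes "\<And>a b. a \<in> A \<Longrightarrow> b \<in> B \<Longrightarrow> c \<le> d a b"
  shows "ereal c \<le> set_dist d A B"
  unfolding set_dist_def by (intro INF_greatest) (simp add: assms)

lemma set_dist_antimono:
  assumes "A \<subseteq> A'" "B \<subseteq> B'"
  shows "set_dist d A' B' \<le> set_dist d A B"
  unfolding set_dist_def by (intro INF_superset_mono assms order_refl)

lemma set_dist_image_isometric:
  assumes "\<And>a b. a \<in> A \<Longrightarrow> b \<in> B \<Longrightarrow> d (\<tau> a) (\<tau> b) = d a b"
  shows "set_dist d (\<tau> ` A) (\<tau> ` B) = set_dist d A B"
  unfolding set_dist_def image_image by (intro INF_cong refl) (simp add: assms)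

lemma R_disjoint_union_of_mono:
  "\<Y> \<subseteq> \<Y>' \<Longrightarrow> R_disjoint_union_of d r \<Y> Z \<Longrightarrow> R_disjoint_union_of d r \<Y>' Z"
  unfolding R_disjoint_union_of_def by blast

lemma R_disjoint_union_of_image:
  assumes "R_disjoint_union_of d r \<Y> Y"
    and "\<And>\<F>. f (\<Union>\<F>) = \<Union>(f ` \<F>)"
    and "\<And>A B. A \<in> \<Y> \<Longrightarrow> B \<in> \<Y> \<Longrightarrow> ereal r < set_dist d A B \<Longrightarrow> ereal r' < set_dist d' (f A) (f B)"
  shows "R_disjoint_union_of d' r' (f ` \<Y>) (f Y)"
proof -
  obtain \<F> where \<F>: "\<F> \<subseteq> \<Y>" "Y = \<Union>\<F>"
    and sep: "\<forall>A\<in>\<F>. \<forall>B\<in>\<F>. A \<noteq> B \<longrightarrow> ereal r < set_dist d A B"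
    using assms(1) unfolding R_disjoint_union_of_def by blast
  have "ereal r' < set_dist d' A' B'"
    if A': "A' \<in> f ` \<F>" and B': "B' \<in> f ` \<F>" and "A' \<noteq> B'" for A' B'
  proof -
    obtain A B where AB: "A \<in> \<F>" "B \<in> \<F>" and "A' = f A" "B' = f B"
      using A' B' by blast
    with \<open>A' \<noteq> B'\<close> have "A \<noteq> B" by auto
    with AB sep have "ereal r < set_dist d A B" by simp
    moreover have "A \<in> \<Y>" "B \<in> \<Y>" using AB \<F>(1) by auto
    ultimately show ?thesis unfolding \<open>A' = f A\<close> \<open>B' = f B\<close> by (rule assms(3)[rotated 2])
  qed
  moreover have "f ` \<F> \<subseteq> f ` \<Y>" "f Y = \<Union>(f ` \<F>)" using \<F> assms(2) by auto
  ultimately show ?thesis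
    unfolding R_disjoint_union_of_def by (intro exI[of _ "f ` \<F>"]) auto
qed

lemma decomposes_iff_singletons:
  "decomposes d \<X> r \<Y> \<longleftrightarrow> (\<forall>Z\<in>\<X>. decomposes d {Z} r \<Y>)"
  unfolding decomposes_def by simp

lemma decomposes_mono:
  assumes "\<X>' \<subseteq> \<X>" "\<Y> \<subseteq> \<Y>'" "decomposes d \<X> r \<Y>"
  shows "decomposes d \<X>' r \<Y>'"
  unfolding decomposes_def
proof
  fix Z assume "Z \<in> \<X>'"
  with assms(1,3) obtain Z0 Z1 where "Z = Z0 \<union> Z1"
    and "R_disjoint_union_of d r \<Y> Z0" "R_disjoint_union_of d r \<Y> Z1"
    unfolding decomposes_def by (meson subsetD)
  then show "\<exists>Z0 Z1. Z = Z0 \<union> Z1 \<and> R_disjoint_union_of d r \<Y>' Z0 \<and> R_disjoint_union_of d r \<Y>' Z1"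
    using R_disjoint_union_of_mono[OF assms(2)] by (intro exI conjI)
qed

lemma decomposes_image:
  assumes "decomposes d \<X> r \<Y>"
    and union: "\<And>\<F>. f (\<Union>\<F>) = \<Union>(f ` \<F>)"
    and "\<And>A B. A \<in> \<Y> \<Longrightarrow> B \<in> \<Y> \<Longrightarrow> ereal r < set_dist d A B \<Longrightarrow> ereal r' < set_dist d' (f A) (f B)"
  shows "decomposes d' (f ` \<X>) r' (f ` \<Y>)"
  unfolding decomposes_def
proof
  fix Z assume "Z \<in> f ` \<X>"
  then obtain X where "X \<in> \<X>" "Z = f X" by blast
  then obtain X0 X1 where "X = X0 \<union> X1"
    and "R_disjoint_union_of d r \<Y> X0" "R_disjoint_union_of d r \<Y> X1"
    using assms(1) unfolding decomposes_def by blast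
  then have "Z = f X0 \<union> f X1"
    and "R_disjoint_union_of d' r' (f ` \<Y>) (f X0)" "R_disjoint_union_of d' r' (f ` \<Y>) (f X1)"
    using \<open>Z = f X\<close> union[of "{X0, X1}"] R_disjoint_union_of_image[OF _ union assms(3)]
    by auto
  then show "\<exists>Z0 Z1. Z = Z0 \<union> Z1 \<and> R_disjoint_union_of d' r' (f ` \<Y>) Z0 \<and>
      R_disjoint_union_of d' r' (f ` \<Y>) Z1"
    by blast
qed

definition decomposition_chain ::
    "('a \<Rightarrow> 'a \<Rightarrow> real) \<Rightarrow> 'a set set \<Rightarrow> (nat \<Rightarrow> real) \<Rightarrow> nat \<Rightarrow> (nat \<Rightarrow> 'a set set) \<Rightarrow> bool" where
  "decomposition_chain d \<X> R n \<Y> \<longleftrightarrow>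
     decomposes d \<X> (R 0) (\<Y> 0) \<and> (\<forall>i. 0 < i \<and> i < n \<longrightarrow> decomposes d (\<Y> (i - 1)) (R i) (\<Y> i))"

lemma straight_FDC_iff_chain:
  "straight_FDC M d \<longleftrightarrow>
     (\<forall>R. (\<forall>i. 0 < R i) \<and> mono R \<longrightarrow>
        (\<exists>n\<ge>1. \<exists>\<Y>. (\<forall>i<n. \<Y> i \<subseteq> Pow M) \<and> decomposition_chain d {M} R n \<Y> \<and>
           uniformly_bounded d (\<Y> (n - 1))))"
  unfolding straight_FDC_def decomposition_chain_def by meson

lemma decomposition_chain_append:
  assumes \<Y>: "decomposition_chain d \<X> R n \<Y>" and n: "1 \<le> n"
    and \<Z>: "decomposition_chain d (\<Y> (n - 1)) (\<lambda>i. R (n + i)) m \<Z>"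
  shows "decomposition_chain d \<X> R (n + m) (\<lambda>i. if i < n then \<Y> i else \<Z> (i - n))"
  unfolding decomposition_chain_def
proof (intro conjI allI impI)
  show "decomposes d \<X> (R 0) (if 0 < n then \<Y> 0 else \<Z> (0 - n))"
    using \<Y> n unfolding decomposition_chain_def by simp
  fix i assume i: "0 < i \<and> i < n + m"
  consider "i < n" | "i = n" | "n < i" by linarith
  then show "decomposes d (if i - 1 < n then \<Y> (i - 1) else \<Z> (i - 1 - n)) (R i)
      (if i < n then \<Y> i else \<Z> (i - n))"
  proof cases
    case 1
    then have "i - 1 < n" by simp
    then show ?thesis using 1 \<Y> i unfolding decomposition_chain_def by simp
  next
    case 2
    then show ?thesis using \<Z> n unfolding decomposition_chain_def by simp
  next
    case 3
    then obtain j where "i = n + j" "0 < j" by (metis less_imp_add_positive)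
    moreover have "\<not> i - 1 < n" "i - 1 - n = j - 1" using \<open>i = n + j\<close> \<open>0 < j\<close> by simp_all
    ultimately show ?thesis using \<Z> i unfolding decomposition_chain_def by simp
  qed
qed

subsection \<open>Pulling decompositions back along a coarse map\<close>

lemma set_dist_preimage_ge:
  assumes "\<And>g h. g \<in> C \<Longrightarrow> h \<in> C \<Longrightarrow> d g h \<le> s \<Longrightarrow> d' (\<pi> g) (\<pi> h) \<le> t"
    and "ereal t < set_dist d' A B"
  shows "ereal s \<le> set_dist d (C \<inter> \<pi> -` A) (C \<inter> \<pi> -` B)"
proof (rule set_dist_greatest)
  fix g h assume g: "g \<in> C \<inter> \<pi> -` A" and h: "h \<in> C \<inter> \<pi> -` B"
  then have "t < d' (\<pi> g) (\<pi> h)"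
    by (intro set_dist_less_imp_less[OF assms(2)]) auto
  with assms(1) g h show "s \<le> d g h" by fastforce
qed

text \<open>The margin \<open>r < s\<close> is needed because \<open>set_dist\<close> is an infimum: pointwise distances
greater than r between the preimages would only bound it below by r.\<close>

lemma decomposes_preimage:
  assumes "decomposes d' \<X> t \<Y>"
    and "\<And>g h. g \<in> C \<Longrightarrow> h \<in> C \<Longrightarrow> d g h \<le> s \<Longrightarrow> d' (\<pi> g) (\<pi> h) \<le> t"
    and "r < s"
  shows "decomposes d ((\<lambda>A. C \<inter> \<pi> -` A) ` \<X>) r ((\<lambda>A. C \<inter> \<pi> -` A) ` \<Y>)"
proof (rule decomposes_image[OF assms(1)])
  fix A B assume sep: "ereal t < set_dist d' A B"
  have "ereal s \<le> set_dist d (C \<inter> \<pi> -` A) (C \<inter> \<pi> -` B)"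
    using assms(2) sep by (rule set_dist_preimage_ge)
  moreover have "ereal r < ereal s" using \<open>r < s\<close> by simp
  ultimately show "ereal r < set_dist d (C \<inter> \<pi> -` A) (C \<inter> \<pi> -` B)"
    by (rule less_le_trans[rotated])
qed auto

lemma decomposition_chain_preimage:
  assumes "decomposition_chain d' \<X> R' n \<Y>"
    and "\<And>i g h. g \<in> C \<Longrightarrow> h \<in> C \<Longrightarrow> d g h \<le> R i + 1 \<Longrightarrow> d' (\<pi> g) (\<pi> h) \<le> R' i"
  shows "decomposition_chain d ((\<lambda>A. C \<inter> \<pi> -` A) ` \<X>) R n (\<lambda>i. (\<lambda>A. C \<inter> \<pi> -` A) ` \<Y> i)"
proof -
  have "decomposes d ((\<lambda>A. C \<inter> \<pi> -` A) ` \<X>') (R i) ((\<lambda>A. C \<inter> \<pi> -` A) ` \<Y>')"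
    if "decomposes d' \<X>' (R' i) \<Y>'" for i \<X>' \<Y>'
    using that by (rule decomposes_preimage[where s = "R i + 1"]) (auto intro: assms(2))
  with assms(1) show ?thesis unfolding decomposition_chain_def by simp
qed

lemma straight_FDC_preimage_chain:
  fixes R :: "nat \<Rightarrow> real" and \<rho> :: "real \<Rightarrow> real"
  assumes "straight_FDC M d'" "\<pi> ` C \<subseteq> M"
    and "mono \<rho>" "\<And>r. 0 < \<rho> r"
    and "\<And>g h r. g \<in> C \<Longrightarrow> h \<in> C \<Longrightarrow> d g h \<le> r \<Longrightarrow> d' (\<pi> g) (\<pi> h) \<le> \<rho> r"
    and "\<forall>i. 0 < R i" "mono R"
  obtains n \<Y> where "1 \<le> n" "decomposition_chain d {C} R n (\<lambda>i. (\<lambda>A. C \<inter> \<pi> -` A) ` \<Y> i)"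
    "uniformly_bounded d' (\<Y> (n - 1))"
proof -
  have "(\<forall>i. 0 < \<rho> (R i + 1)) \<and> mono (\<lambda>i. \<rho> (R i + 1))"
    using assms(3,4,7) by (auto simp: mono_def)
  from assms(1)[unfolded straight_FDC_iff_chain, rule_format, OF this]
  obtain n \<Y> where "1 \<le> n" and chain: "decomposition_chain d' {M} (\<lambda>i. \<rho> (R i + 1)) n \<Y>"
    and "uniformly_bounded d' (\<Y> (n - 1))"
    by blast
  moreover have "decomposition_chain d ((\<lambda>A. C \<inter> \<pi> -` A) ` {M}) R n (\<lambda>i. (\<lambda>A. C \<inter> \<pi> -` A) ` \<Y> i)"
    using chain by (rule decomposition_chain_preimage) (rule assms(5))
  moreover have "(\<lambda>A. C \<inter> \<pi> -` A) ` {M} = {C}" using assms(2) by auto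
  ultimately show thesis using that by simp
qed

subsection \<open>Transporting decompositions to translated copies\<close>

definition restricted_copies :: "('a \<Rightarrow> 'a) set \<Rightarrow> 'a set \<Rightarrow> 'a set set \<Rightarrow> 'a set set \<Rightarrow> 'a set set" where
  "restricted_copies \<I> S \<W> \<Z> = {W \<inter> \<tau> ` A | W \<tau> A. W \<in> \<W> \<and> \<tau> \<in> \<I> \<and> W \<subseteq> \<tau> ` S \<and> A \<in> \<Z>}"

context
  fixes d :: "'a \<Rightarrow> 'a \<Rightarrow> real" and \<I> :: "('a \<Rightarrow> 'a) set" and S :: "'a set"
  assumes isometric: "\<And>\<tau> a b. \<tau> \<in> \<I> \<Longrightarrow> a \<in> S \<Longrightarrow> b \<in> S \<Longrightarrow> d (\<tau> a) (\<tau> b) = d a b"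
begin

lemma set_dist_restricted_copy_ge:
  assumes "\<tau> \<in> \<I>" "A \<subseteq> S" "B \<subseteq> S"
  shows "set_dist d A B \<le> set_dist d (W \<inter> \<tau> ` A) (W \<inter> \<tau> ` B)"
proof -
  have "set_dist d (\<tau> ` A) (\<tau> ` B) = set_dist d A B"
    using assms by (intro set_dist_image_isometric isometric) auto
  moreover have "set_dist d (\<tau> ` A) (\<tau> ` B) \<le> set_dist d (W \<inter> \<tau> ` A) (W \<inter> \<tau> ` B)"
    by (intro set_dist_antimono) auto
  ultimately show ?thesis by simp
qed

lemma decomposes_restricted_copies:
  assumes "decomposes d \<Z> r \<Z>'" "\<Z>' \<subseteq> Pow S"
  shows "decomposes d (restricted_copies \<I> S \<W> \<Z>) r (restricted_copies \<I> S \<W> \<Z>')"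
  unfolding decomposes_iff_singletons[of d "restricted_copies \<I> S \<W> \<Z>"]
proof
  fix V assume "V \<in> restricted_copies \<I> S \<W> \<Z>"
  then obtain W \<tau> Z where W: "W \<in> \<W>" "\<tau> \<in> \<I>" "W \<subseteq> \<tau> ` S" and "Z \<in> \<Z>" and V: "V = W \<inter> \<tau> ` Z"
    unfolding restricted_copies_def by blast
  then have "decomposes d {Z} r \<Z>'"
    using assms(1) unfolding decomposes_iff_singletons[of d \<Z>] by simp
  then have "decomposes d ((\<lambda>A. W \<inter> \<tau> ` A) ` {Z}) r ((\<lambda>A. W \<inter> \<tau> ` A) ` \<Z>')"
  proof (rule decomposes_image)
    fix A B assume "A \<in> \<Z>'" "B \<in> \<Z>'" and sep: "ereal r < set_dist d A B"
    have "set_dist d A B \<le> set_dist d (W \<inter> \<tau> ` A) (W \<inter> \<tau> ` B)"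
      using \<open>A \<in> \<Z>'\<close> \<open>B \<in> \<Z>'\<close> assms(2) W(2)
      by (intro set_dist_restricted_copy_ge) auto
    with sep show "ereal r < set_dist d (W \<inter> \<tau> ` A) (W \<inter> \<tau> ` B)"
      by (rule less_le_trans)
  qed auto
  then have dec: "decomposes d {V} r ((\<lambda>A. W \<inter> \<tau> ` A) ` \<Z>')"
    unfolding V by simp
  have "(\<lambda>A. W \<inter> \<tau> ` A) ` \<Z>' \<subseteq> restricted_copies \<I> S \<W> \<Z>'"
    using W unfolding restricted_copies_def by blast
  then show "decomposes d {V} r (restricted_copies \<I> S \<W> \<Z>')"
    by (rule decomposes_mono[OF order_refl _ dec])
qed

lemma subset_restricted_copies_self:
  assumes "\<And>W. W \<in> \<W> \<Longrightarrow> \<exists>\<tau>\<in>\<I>. W \<subseteq> \<tau> ` S"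
  shows "\<W> \<subseteq> restricted_copies \<I> S \<W> {S}"
proof
  fix W assume "W \<in> \<W>"
  with assms obtain \<tau> where "\<tau> \<in> \<I>" "W \<subseteq> \<tau> ` S" by blast
  then have "W = W \<inter> \<tau> ` S" by blast
  with \<open>W \<in> \<W>\<close> \<open>\<tau> \<in> \<I>\<close> \<open>W \<subseteq> \<tau> ` S\<close> show "W \<in> restricted_copies \<I> S \<W> {S}"
    unfolding restricted_copies_def by blast
qed

lemma decomposition_chain_restricted_copies:
  assumes "decomposition_chain d {S} R m \<Z>" "\<And>i. i < m \<Longrightarrow> \<Z> i \<subseteq> Pow S" "0 < m"
    and "\<And>W. W \<in> \<W> \<Longrightarrow> \<exists>\<tau>\<in>\<I>. W \<subseteq> \<tau> ` S"
  shows "decomposition_chain d \<W> R m (\<lambda>i. restricted_copies \<I> S \<W> (\<Z> i))"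
  unfolding decomposition_chain_def
proof (intro conjI allI impI)
  have "decomposes d (restricted_copies \<I> S \<W> {S}) (R 0) (restricted_copies \<I> S \<W> (\<Z> 0))"
    using assms(1,2,3) unfolding decomposition_chain_def
    by (intro decomposes_restricted_copies) auto
  moreover have "\<W> \<subseteq> restricted_copies \<I> S \<W> {S}"
    using assms(4) by (rule subset_restricted_copies_self)
  ultimately show "decomposes d \<W> (R 0) (restricted_copies \<I> S \<W> (\<Z> 0))"
    using decomposes_mono by blast
  fix i assume "0 < i \<and> i < m"
  then show "decomposes d (restricted_copies \<I> S \<W> (\<Z> (i - 1))) (R i) (restricted_copies \<I> S \<W> (\<Z> i))"
    using assms(1,2) unfolding decomposition_chain_def
    by (intro decomposes_restricted_copies) auto
qed

lemma uniformly_bounded_restricted_copies: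
  assumes "uniformly_bounded d \<Z>" "\<Z> \<subseteq> Pow S"
  shows "uniformly_bounded d (restricted_copies \<I> S \<W> \<Z>)"
proof -
  obtain B where B: "\<And>Z a b. Z \<in> \<Z> \<Longrightarrow> a \<in> Z \<Longrightarrow> b \<in> Z \<Longrightarrow> d a b \<le> B"
    using assms(1) unfolding uniformly_bounded_def by blast
  have "d a b \<le> B" if V: "V \<in> restricted_copies \<I> S \<W> \<Z>" and "a \<in> V" "b \<in> V" for V a b
  proof -
    obtain W \<tau> Z where "\<tau> \<in> \<I>" "Z \<in> \<Z>" "V = W \<inter> \<tau> ` Z"
      using V unfolding restricted_copies_def by blast
    then obtain a' b' where "a' \<in> Z" "b' \<in> Z" "a = \<tau> a'" "b = \<tau> b'"
      using \<open>a \<in> V\<close> \<open>b \<in> V\<close> by blast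
    moreover have "a' \<in> S" "b' \<in> S" using \<open>a' \<in> Z\<close> \<open>b' \<in> Z\<close> \<open>Z \<in> \<Z>\<close> assms(2) by auto
    ultimately show ?thesis using \<open>\<tau> \<in> \<I>\<close> \<open>Z \<in> \<Z>\<close> B isometric by simp
  qed
  then show ?thesis unfolding uniformly_bounded_def by blast
qed

end

lemma restricted_copies_subset_Pow:
  "\<W> \<subseteq> Pow C \<Longrightarrow> restricted_copies \<I> S \<W> \<Z> \<subseteq> Pow C"
  unfolding restricted_copies_def by blast

lemma decomposition_chain_completion_by_copies:
  fixes R :: "nat \<Rightarrow> real"
  assumes "decomposition_chain d \<X> R n \<Y>" "1 \<le> n" "\<And>i. i < n \<Longrightarrow> \<Y> i \<subseteq> Pow C"
    and "\<forall>i. 0 < R i" "mono R"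
    and "straight_FDC S d"
    and "\<And>\<tau> a b. \<tau> \<in> \<I> \<Longrightarrow> a \<in> S \<Longrightarrow> b \<in> S \<Longrightarrow> d (\<tau> a) (\<tau> b) = d a b"
    and "\<And>W. W \<in> \<Y> (n - 1) \<Longrightarrow> \<exists>\<tau>\<in>\<I>. W \<subseteq> \<tau> ` S"
  shows "\<exists>N\<ge>1. \<exists>\<Y>'. (\<forall>i<N. \<Y>' i \<subseteq> Pow C) \<and> decomposition_chain d \<X> R N \<Y>' \<and>
           uniformly_bounded d (\<Y>' (N - 1))"
proof -
  have "(\<forall>i. 0 < R (n + i)) \<and> mono (\<lambda>i. R (n + i))"
    using assms(4,5) by (auto simp: mono_def)
  from assms(6)[unfolded straight_FDC_iff_chain, rule_format, OF this]
  obtain m \<Z> where m: "1 \<le> m" and \<Z>: "\<forall>i<m. \<Z> i \<subseteq> Pow S"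
    and chain: "decomposition_chain d {S} (\<lambda>i. R (n + i)) m \<Z>"
    and bounded: "uniformly_bounded d (\<Z> (m - 1))"
    by blast
  define \<Z>' where "\<Z>' i = restricted_copies \<I> S (\<Y> (n - 1)) (\<Z> i)" for i
  have "decomposition_chain d (\<Y> (n - 1)) (\<lambda>i. R (n + i)) m \<Z>'"
    unfolding \<Z>'_def using assms(7) chain \<Z> m assms(8)
    by (intro decomposition_chain_restricted_copies) auto
  then have "decomposition_chain d \<X> R (n + m) (\<lambda>i. if i < n then \<Y> i else \<Z>' (i - n))"
    using assms(1,2) by (intro decomposition_chain_append)
  moreover have "uniformly_bounded d (\<Z>' (m - 1))"
    unfolding \<Z>'_def using assms(7) bounded \<Z> m
    by (intro uniformly_bounded_restricted_copies) auto
  moreover have "\<Z>' i \<subseteq> Pow C" for i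
    unfolding \<Z>'_def using assms(2,3) by (intro restricted_copies_subset_Pow) auto
  moreover have "\<not> n + m - 1 < n" "n + m - 1 - n = m - 1"
    using m by simp_all
  ultimately show ?thesis
    using assms(2,3) m
    by (intro exI[of _ "n + m"] exI[of _ "\<lambda>i. if i < n then \<Y> i else \<Z>' (i - n)"] conjI allI impI)
      simp_all
qed

subsection \<open>Isometric actions of groups with proper metrics\<close>

lemma (in Metric_space) finite_balls_bound:
  fixes f :: "'a \<Rightarrow> real"
  assumes finite: "\<And>r. finite (mcball e r)" and "e \<in> M"
  obtains \<rho> :: "real \<Rightarrow> real" where "mono \<rho>" "\<And>r. 0 < \<rho> r" "\<And>k r. k \<in> M \<Longrightarrow> d k e \<le> r \<Longrightarrow> f k \<le> \<rho> r"
proof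
  \<comment> \<open>A sum over the ball rather than a maximum makes \<open>\<rho>\<close> monotone for free.\<close>
  define \<rho> where "\<rho> r = 1 + (\<Sum>k\<in>mcball e r. \<bar>f k\<bar>)" for r
  show "mono \<rho>"
    unfolding \<rho>_def mono_def by (auto intro!: sum_mono2 finite)
  show "0 < \<rho> r" for r
    unfolding \<rho>_def by (simp add: add_pos_nonneg sum_nonneg)
  fix k r assume "k \<in> M" "d k e \<le> r"
  then have "k \<in> mcball e r" using assms(2) commute by simp
  then have "\<bar>f k\<bar> \<le> (\<Sum>k\<in>mcball e r. \<bar>f k\<bar>)"
    by (intro member_le_sum finite) auto
  then show "f k \<le> \<rho> r" unfolding \<rho>_def by simp
qed

locale proper_isometric_action = group G + group_action G E \<phi> + MG: Metric_space "carrier G" dG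
  for G (structure) and E and \<phi> and dG +
  fixes dX :: "'x \<Rightarrow> 'x \<Rightarrow> real"
  assumes proper: "\<And>S. S \<subseteq> carrier G \<Longrightarrow> MG.mbounded S \<Longrightarrow> finite S"
    and left_invariant: "\<And>g a b. g \<in> carrier G \<Longrightarrow> a \<in> carrier G \<Longrightarrow> b \<in> carrier G \<Longrightarrow>
      dG (g \<otimes> a) (g \<otimes> b) = dG a b"
    and isometric: "\<And>g x y. g \<in> carrier G \<Longrightarrow> x \<in> E \<Longrightarrow> y \<in> E \<Longrightarrow> dX (\<phi> g x) (\<phi> g y) = dX x y"
begin

lemma finite_mcball: "finite (MG.mcball e r)"
  by (rule proper) (auto simp: MG.mbounded_mcball)

lemma orbit_dist_eq_dist_to_base:
  assumes "x0 \<in> E" "g \<in> carrier G" "h \<in> carrier G"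
  shows "dX (\<phi> g x0) (\<phi> h x0) = dX (\<phi> (inv h \<otimes> g) x0) x0"
proof -
  have "\<phi> (inv h \<otimes> g) x0 = \<phi> (inv h) (\<phi> g x0)"
    using composition_rule[of x0 "inv h" g] assms by simp
  moreover have "\<phi> (inv h) (\<phi> h x0) = x0"
    using assms(3,1) by (rule orbit_sym_aux) simp
  moreover have "\<phi> g x0 \<in> E" "\<phi> h x0 \<in> E"
    using assms element_image by blast+
  ultimately show ?thesis
    using assms(2,3) isometric[of "inv h" "\<phi> g x0" "\<phi> h x0"] by simp
qed

lemma orbit_map_coarse:
  assumes "x0 \<in> E"
  obtains \<rho> :: "real \<Rightarrow> real" where "mono \<rho>" "\<And>r. 0 < \<rho> r"
    "\<And>g h r. g \<in> carrier G \<Longrightarrow> h \<in> carrier G \<Longrightarrow> dG g h \<le> r \<Longrightarrow> dX (\<phi> g x0) (\<phi> h x0) \<le> \<rho> r"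
proof -
  obtain \<rho> :: "real \<Rightarrow> real" where \<rho>: "mono \<rho>" "\<And>r. 0 < \<rho> r"
    and bound: "\<And>k r. k \<in> carrier G \<Longrightarrow> dG k \<one> \<le> r \<Longrightarrow> dX (\<phi> k x0) x0 \<le> \<rho> r"
    using MG.finite_balls_bound[OF finite_mcball one_closed, of "\<lambda>k. dX (\<phi> k x0) x0"] by blast
  have "dX (\<phi> g x0) (\<phi> h x0) \<le> \<rho> r"
    if "g \<in> carrier G" "h \<in> carrier G" "dG g h \<le> r" for g h r
  proof -
    have "dG (inv h \<otimes> g) \<one> = dG g h"
      using left_invariant[of "inv h" g h] that(1,2) by simp
    then show ?thesis
      using bound[of "inv h \<otimes> g" r] that orbit_dist_eq_dist_to_base[OF assms] by simp
  qed
  with \<rho> that show thesis by blast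
qed

lemma left_translation_isometric:
  assumes "\<tau> \<in> (\<otimes>) ` carrier G" "a \<in> carrier G" "b \<in> carrier G"
  shows "dG (\<tau> a) (\<tau> b) = dG a b"
  using assms left_invariant by blast

lemma preimage_subset_translate_coarse_stabilizer:
  assumes "x0 \<in> E" "\<And>a b. a \<in> A \<Longrightarrow> b \<in> A \<Longrightarrow> dX a b \<le> B"
  shows "\<exists>\<tau>\<in>(\<otimes>) ` carrier G. carrier G \<inter> (\<lambda>h. \<phi> h x0) -` A \<subseteq> \<tau> ` {k \<in> carrier G. dX (\<phi> k x0) x0 \<le> B}"
proof (cases "carrier G \<inter> (\<lambda>h. \<phi> h x0) -` A = {}")
  case False
  then obtain g where g: "g \<in> carrier G" "\<phi> g x0 \<in> A" by blast
  have "h \<in> (\<otimes>) g ` {k \<in> carrier G. dX (\<phi> k x0) x0 \<le> B}"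
    if "h \<in> carrier G" "\<phi> h x0 \<in> A" for h
  proof
    show "h = g \<otimes> (inv g \<otimes> h)" using g(1) that(1) by (simp add: m_assoc[symmetric])
    have "dX (\<phi> (inv g \<otimes> h) x0) x0 = dX (\<phi> h x0) (\<phi> g x0)"
      using orbit_dist_eq_dist_to_base[OF assms(1) that(1) g(1)] by simp
    then show "inv g \<otimes> h \<in> {k \<in> carrier G. dX (\<phi> k x0) x0 \<le> B}"
      using assms(2) g that by simp
  qed
  with g(1) show ?thesis by blast
qed auto

lemma preimages_in_translates_of_coarse_stabilizer:
  assumes "x0 \<in> E" "\<And>A a b. A \<in> \<Y> \<Longrightarrow> a \<in> A \<Longrightarrow> b \<in> A \<Longrightarrow> dX a b \<le> B"
    and "W \<in> (\<lambda>A. carrier G \<inter> (\<lambda>h. \<phi> h x0) -` A) ` \<Y>"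
  shows "\<exists>\<tau>\<in>(\<otimes>) ` carrier G. W \<subseteq> \<tau> ` {k \<in> carrier G. dX (\<phi> k x0) x0 \<le> B}"
proof -
  obtain A where "A \<in> \<Y>" "W = carrier G \<inter> (\<lambda>h. \<phi> h x0) -` A"
    using assms(3) by blast
  then show ?thesis
    using preimage_subset_translate_coarse_stabilizer[OF assms(1), of A B] assms(2) by simp
qed

end

theorem proposition5p4:
  fixes G :: "('g, 'b) monoid_scheme"
    and dG :: "'g \<Rightarrow> 'g \<Rightarrow> real"
    and M :: "'x set"
    and dX :: "'x \<Rightarrow> 'x \<Rightarrow> real"
    and \<phi> :: "'g \<Rightarrow> 'x \<Rightarrow> 'x"
    and x0 :: 'x
  assumes "group G"
    and "countable (carrier G)"
    and "Metric_space (carrier G) dG"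
    and "\<And>S. S \<subseteq> carrier G \<Longrightarrow> Metric_space.mbounded (carrier G) dG S \<Longrightarrow> finite S"
    and "\<And>g a b. g \<in> carrier G \<Longrightarrow> a \<in> carrier G \<Longrightarrow> b \<in> carrier G \<Longrightarrow>
           dG (g \<otimes>\<^bsub>G\<^esub> a) (g \<otimes>\<^bsub>G\<^esub> b) = dG a b"
    and "Metric_space M dX"
    and "group_action G M \<phi>"
    and "\<And>g x y. g \<in> carrier G \<Longrightarrow> x \<in> M \<Longrightarrow> y \<in> M \<Longrightarrow> dX (\<phi> g x) (\<phi> g y) = dX x y"
    and "straight_FDC M dX"
    and "x0 \<in> M"
    and "\<And>R. R > 0 \<Longrightarrow> straight_FDC {g \<in> carrier G. dX (\<phi> g x0) x0 \<le> R} dG"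
  shows "straight_FDC (carrier G) dG"
proof -
  interpret proper_isometric_action G M \<phi> dG dX
    by (intro proper_isometric_action.intro proper_isometric_action_axioms.intro assms(1,3,4,5,7,8))
  show ?thesis
    unfolding straight_FDC_iff_chain
  proof (intro allI impI)
    fix R :: "nat \<Rightarrow> real" assume R: "(\<forall>i. 0 < R i) \<and> mono R"
    obtain \<rho> :: "real \<Rightarrow> real" where \<rho>: "mono \<rho>" "\<And>r. 0 < \<rho> r"
      "\<And>g h r. g \<in> carrier G \<Longrightarrow> h \<in> carrier G \<Longrightarrow> dG g h \<le> r \<Longrightarrow> dX (\<phi> g x0) (\<phi> h x0) \<le> \<rho> r"
      using orbit_map_coarse[OF assms(10)] by blast
    have "(\<lambda>g. \<phi> g x0) ` carrier G \<subseteq> M"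
      using assms(10) element_image by blast
    then obtain n \<Y> where n: "1 \<le> n"
      and chain: "decomposition_chain dG {carrier G} R n (\<lambda>i. (\<lambda>A. carrier G \<inter> (\<lambda>g. \<phi> g x0) -` A) ` \<Y> i)"
      and bounded: "uniformly_bounded dX (\<Y> (n - 1))"
      using straight_FDC_preimage_chain[where M = M and \<rho> = \<rho>] assms(9) \<rho> R by blast
    obtain B where B: "\<And>A a b. A \<in> \<Y> (n - 1) \<Longrightarrow> a \<in> A \<Longrightarrow> b \<in> A \<Longrightarrow> dX a b \<le> max B 1"
      using bounded unfolding uniformly_bounded_def by (meson max.coboundedI1)
    show "\<exists>N\<ge>1. \<exists>\<Y>'. (\<forall>i<N. \<Y>' i \<subseteq> Pow (carrier G)) \<and>
        decomposition_chain dG {carrier G} R N \<Y>' \<and> uniformly_bounded dG (\<Y>' (N - 1))"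
    proof (rule decomposition_chain_completion_by_copies[OF chain n])
      show "straight_FDC {k \<in> carrier G. dX (\<phi> k x0) x0 \<le> max B 1} dG"
        by (rule assms(11)) simp
      show "\<exists>\<tau>\<in>(\<otimes>\<^bsub>G\<^esub>) ` carrier G. W \<subseteq> \<tau> ` {k \<in> carrier G. dX (\<phi> k x0) x0 \<le> max B 1}"
        if "W \<in> (\<lambda>A. carrier G \<inter> (\<lambda>g. \<phi> g x0) -` A) ` \<Y> (n - 1)" for W
        by (rule preimages_in_translates_of_coarse_stabilizer[OF assms(10) B that])
    qed (use R in \<open>auto intro: left_translation_isometric\<close>)
  qed
qed

end
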